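(* A ring $R$ is a CUNC ring if and only if $R$ is an abelian CSNC ring.
   Context: All rings are associative with identity $1$. For a ring $R$, $\mathrm{Id}(R)$, $U(R)$, $\mathrm{Nil}(R)$ denote the sets of idempotents, units and nilpotent elements. An element $a\in R$ is clean if $a=e+u$ for some $e\in\mathrm{Id}(R)$, $u\in U(R)$. An element $a$ is strongly nil-clean if $a=e+q$ with $e\in \mathrm{Id}(R)$, $q\in\mathrm{Nil}(R)$ and $eq=qe$; $a$ is uniquely nil-clean if there is exactly one $e\in\mathrm{Id}(R)$ with $a-e\in\mathrm{Nil}(R)$. A ring $R$ is called CSNC if every clean element of $R$ is strongly nil-clean, and CUNC if every clean element of $R$ is uniquely nil-clean. $R$ is abelian if all its idempotents are central. *)

theory Defs
  imports Main
begin

definition Idem :: "'a::ring_1 set" where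
  "Idem = {e. e * e = e}"

definition Units :: "'a::ring_1 set" where
  "Units = {u. \<exists>v. u * v = 1 \<and> v * u = 1}"

definition Nilp :: "'a::ring_1 set" where
  "Nilp = {q. \<exists>n::nat. q ^ n = 0}"

definition clean_elem :: "'a::ring_1 \<Rightarrow> bool" where
  "clean_elem a \<longleftrightarrow> (\<exists>e u. e \<in> Idem \<and> u \<in> Units \<and> a = e + u)"

definition strongly_nil_clean_elem :: "'a::ring_1 \<Rightarrow> bool" where
  "strongly_nil_clean_elem a \<longleftrightarrow>
     (\<exists>e q. e \<in> Idem \<and> q \<in> Nilp \<and> a = e + q \<and> e * q = q * e)"

definition uniquely_nil_clean_elem :: "'a::ring_1 \<Rightarrow> bool" where
  "uniquely_nil_clean_elem a \<longleftrightarrow> (\<exists>!e. e \<in> Idem \<and> a - e \<in> Nilp)"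

definition CSNC :: "'a::ring_1 itself \<Rightarrow> bool" where
  "CSNC _ \<longleftrightarrow> (\<forall>a::'a. clean_elem a \<longrightarrow> strongly_nil_clean_elem a)"

definition CUNC :: "'a::ring_1 itself \<Rightarrow> bool" where
  "CUNC _ \<longleftrightarrow> (\<forall>a::'a. clean_elem a \<longrightarrow> uniquely_nil_clean_elem a)"

definition abelian_ring :: "'a::ring_1 itself \<Rightarrow> bool" where
  "abelian_ring _ \<longleftrightarrow> (\<forall>e::'a. e \<in> Idem \<longrightarrow> (\<forall>x::'a. e * x = x * e))"

end

theory Submission
  imports Defs
begin

text \<open>If \<open>R\<close> is CUNC, then for every idempotent \<open>e\<close> and every \<open>x\<close> the element
  \<open>f = e + e x (1 - e)\<close> is an idempotent, hence clean, and \<open>f - e\<close> squares to zero; uniqueness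
  of the nil-clean idempotent of \<open>f\<close> forces \<open>e x (1 - e) = 0\<close>, and by symmetry
  \<open>(1 - e) x e = 0\<close>, so \<open>e\<close> is central. In an abelian ring every nil-clean decomposition
  commutes, which gives CSNC. Conversely, in an abelian CSNC ring two nil-clean idempotents
  \<open>e, f\<close> of a clean element commute, and \<open>e - f\<close> is a difference of commuting nilpotents,
  hence nilpotent; but \<open>(e - f)\<^sup>3 = e - f\<close>, so \<open>(e - f)\<^sup>2\<close> is a nilpotent idempotent and
  \<open>e = f\<close>.\<close>

lemma power_add_commuting_split:
  fixes x y :: "'a::ring_1"
  assumes xy: "x * y = y * x"
  shows "\<exists>u v. (x + y) ^ (i + j) = x ^ i * u + y ^ j * v"
proof (induction "i + j" arbitrary: i j)
  case 0
  then show ?case by (intro exI[of _ 1] exI[of _ 0]) simp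
next
  case (Suc k)
  consider "i = 0" | "j = 0" | i' j' where "i = Suc i'" "j = Suc j'"
    by (meson not0_implies_Suc)
  then show ?case
  proof cases
    case 1
    then show ?thesis by (intro exI[of _ "(x + y) ^ j"] exI[of _ 0]) simp
  next
    case 2
    then show ?thesis by (intro exI[of _ 0] exI[of _ "(x + y) ^ i"]) simp
  next
    case 3
    obtain u v where uv: "(x + y) ^ k = x ^ i' * u + y ^ j * v"
      using Suc.hyps(1)[of i' j] Suc.hyps(2) 3 by auto
    obtain u' v' where uv': "(x + y) ^ k = x ^ i * u' + y ^ j' * v'"
      using Suc.hyps(1)[of i j'] Suc.hyps(2) 3 by auto
    have yx: "y * x ^ i = x ^ i * y" and xy': "x * y ^ j = y ^ j * x"
      using power_commuting_commutes[OF xy] power_commuting_commutes[OF xy[symmetric]]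
      by simp_all
    \<comment> \<open>expand each summand of \<open>x (x + y)\<^sup>k + y (x + y)\<^sup>k\<close> with a different
      decomposition of \<open>(x + y)\<^sup>k\<close>\<close>
    have "(x + y) ^ (i + j) = x * (x + y) ^ k + y * (x + y) ^ k"
      by (simp add: Suc.hyps(2)[symmetric] distrib_right)
    also have "\<dots> = x * (x ^ i' * u + y ^ j * v) + y * (x ^ i * u' + y ^ j' * v')"
      using uv uv' by simp
    also have "\<dots> = x ^ i * (u + y * u') + y ^ j * (x * v + v')"
      using 3 yx xy' by (simp add: distrib_left mult.assoc[symmetric])
    finally show ?thesis by blast
  qed
qed

lemma Nilp_add_commuting:
  fixes x y :: "'a::ring_1"
  assumes "x * y = y * x" and "x \<in> Nilp" and "y \<in> Nilp"
  shows "x + y \<in> Nilp"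
proof -
  obtain n m where "x ^ n = 0" "y ^ m = 0"
    using assms(2,3) unfolding Nilp_def by blast
  moreover obtain u v where "(x + y) ^ (n + m) = x ^ n * u + y ^ m * v"
    using power_add_commuting_split[OF assms(1)] by blast
  ultimately have "(x + y) ^ (n + m) = 0" by simp
  then show ?thesis unfolding Nilp_def by blast
qed

lemma Nilp_uminus:
  fixes y :: "'a::ring_1"
  assumes "y \<in> Nilp"
  shows "- y \<in> Nilp"
proof -
  obtain m where "y ^ m = 0" using assms unfolding Nilp_def by blast
  then have "(- y) ^ m = 0" by (subst power_minus) simp
  then show ?thesis unfolding Nilp_def by blast
qed

lemma Nilp_diff_commuting:
  fixes x y :: "'a::ring_1"
  assumes "x * y = y * x" and "x \<in> Nilp" and "y \<in> Nilp"
  shows "x - y \<in> Nilp"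
  using Nilp_add_commuting[of x "- y"] Nilp_uminus[OF assms(3)] assms(1,2) by simp

lemma idempotent_Nilp_eq_0:
  fixes e :: "'a::ring_1"
  assumes "e * e = e" and "e \<in> Nilp"
  shows "e = 0"
proof -
  obtain n where n: "e ^ n = 0" using assms(2) unfolding Nilp_def by blast
  have pow: "e ^ Suc k = e" for k
  proof (induction k)
    case (Suc k)
    then show ?case using assms(1) by (simp only: power_Suc)
  qed simp
  have "e = e ^ n * e" using pow[of n] by (simp only: power_Suc2)
  with n show ?thesis by simp
qed

lemma commuting_idempotents_eq_if_diff_Nilp:
  fixes e f :: "'a::ring_1"
  assumes e: "e * e = e" and f: "f * f = f" and ef: "e * f = f * e"
    and d: "e - f \<in> Nilp"
  shows "e = f"
proof -
  let ?d = "e - f"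
  have cube: "?d * (?d * ?d) = ?d"
  proof -
    have eef: "e * (e * f) = e * f"
      using e by (simp add: mult.assoc[symmetric])
    have fef: "f * (e * f) = e * f"
      by (metis ef f mult.assoc)
    have sq: "?d * ?d = e + f - (e * f + e * f)"
      by (simp add: left_diff_distrib right_diff_distrib e f ef[symmetric] algebra_simps)
    show ?thesis unfolding sq
      by (simp add: left_diff_distrib right_diff_distrib distrib_left e f ef[symmetric] eef fef
          algebra_simps)
  qed
  have "(?d * ?d) * (?d * ?d) = ?d * ?d"
    by (metis cube mult.assoc)
  moreover have "?d * ?d \<in> Nilp"
  proof -
    obtain n where "?d ^ n = 0" using d unfolding Nilp_def by blast
    then have "(?d ^ 2) ^ n = 0" by (simp add: power_mult[symmetric] mult_2 power_add)
    then show ?thesis unfolding Nilp_def power2_eq_square by blast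
  qed
  ultimately have "?d * ?d = 0" by (rule idempotent_Nilp_eq_0)
  then have "?d = 0" by (metis cube mult_zero_right)
  then show ?thesis by simp
qed

lemma idempotent_clean_elem:
  fixes e :: "'a::ring_1"
  assumes "e * e = e"
  shows "clean_elem e"
proof -
  define g where "g = 1 - e"
  have g: "g * g = g" "e * g = 0" "g * e = 0" "e + g = 1"
    using assms unfolding g_def by (simp_all add: algebra_simps)
  have "(e - g) * (e - g) = 1"
    by (simp add: left_diff_distrib right_diff_distrib g assms)
  then have "g \<in> Idem" "e - g \<in> Units"
    using g unfolding Idem_def Units_def by auto
  then show ?thesis
    unfolding clean_elem_def using g(4)
    by (intro exI[of _ g] exI[of _ "e - g"]) (simp add: algebra_simps)
qed

lemma CUNC_idempotent_corner_eq_0: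
  fixes e x :: "'a::ring_1"
  assumes C: "CUNC TYPE('a)" and e: "e * e = e"
  shows "e * x * (1 - e) = 0"
proof -
  define n where "n = e * x * (1 - e)"
  have ne: "n * e = 0"
    unfolding n_def using e by (simp add: algebra_simps)
  have en: "e * n = n"
    unfolding n_def using e by (simp add: mult.assoc[symmetric])
  have "n * n = n * e * x * (1 - e)"
    by (subst (2) n_def) (simp add: mult.assoc)
  then have nn: "n * n = 0"
    using ne by simp
  have f: "(e + n) * (e + n) = e + n"
    by (simp add: distrib_left distrib_right e en ne nn)
  have "uniquely_nil_clean_elem (e + n)"
    using C idempotent_clean_elem[OF f] unfolding CUNC_def by blast
  moreover have "(e + n) - (e + n) \<in> Nilp" "(e + n) - e \<in> Nilp"
    unfolding Nilp_def using nn by (auto intro: exI[of _ 1] exI[of _ 2] simp: power2_eq_square)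
  ultimately have "e + n = e"
    using e f unfolding uniquely_nil_clean_elem_def Idem_def by blast
  then show ?thesis unfolding n_def by simp
qed

lemma CUNC_imp_abelian_ring:
  assumes C: "CUNC TYPE('a::ring_1)"
  shows "abelian_ring TYPE('a)"
  unfolding abelian_ring_def
proof (intro allI impI)
  fix e x :: 'a
  assume "e \<in> Idem"
  then have e: "e * e = e" by (simp add: Idem_def)
  then have e': "(1 - e) * (1 - e) = 1 - e" by (simp add: algebra_simps)
  have "e * x - e * x * e = e * x * (1 - e)" by (simp add: right_diff_distrib)
  also have "\<dots> = 0" by (rule CUNC_idempotent_corner_eq_0[OF C e])
  finally have left: "e * x = e * x * e" by simp
  have "x * e - e * x * e = (1 - e) * x * (1 - (1 - e))" by (simp add: left_diff_distrib)
  also have "\<dots> = 0" by (rule CUNC_idempotent_corner_eq_0[OF C e'])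
  finally have right: "x * e = e * x * e" by simp
  from left right show "e * x = x * e" by simp
qed

lemma abelian_ring_uniquely_nil_clean_imp_strongly_nil_clean:
  fixes a :: "'a::ring_1"
  assumes "abelian_ring TYPE('a)" and "uniquely_nil_clean_elem a"
  shows "strongly_nil_clean_elem a"
proof -
  obtain e where e: "e \<in> Idem" "a - e \<in> Nilp"
    using assms(2) unfolding uniquely_nil_clean_elem_def by blast
  then have "e * (a - e) = (a - e) * e"
    using assms(1) unfolding abelian_ring_def by blast
  with e show ?thesis
    unfolding strongly_nil_clean_elem_def by (intro exI[of _ e] exI[of _ "a - e"]) simp
qed

lemma abelian_ring_strongly_nil_clean_imp_uniquely_nil_clean:
  fixes a :: "'a::ring_1"
  assumes ab: "abelian_ring TYPE('a)" and "strongly_nil_clean_elem a"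
  shows "uniquely_nil_clean_elem a"
proof -
  have central: "e * y = y * e" if "e \<in> Idem" for e y :: 'a
    using ab that unfolding abelian_ring_def by blast
  obtain e where e: "e \<in> Idem" "a - e \<in> Nilp"
    using assms(2) unfolding strongly_nil_clean_elem_def by auto
  have "f = e" if f: "f \<in> Idem" "a - f \<in> Nilp" for f
  proof (rule commuting_idempotents_eq_if_diff_Nilp)
    have "(a - e) * (a - f) = (a - f) * (a - e)"
      using central[OF e(1), of a] central[OF f(1), of a] central[OF e(1), of f]
      by (simp add: algebra_simps)
    then have "(a - e) - (a - f) \<in> Nilp"
      using Nilp_diff_commuting e(2) f(2) by blast
    then show "f - e \<in> Nilp" by simp
  qed (use e f central in \<open>auto simp: Idem_def\<close>)
  with e show ?thesis
    unfolding uniquely_nil_clean_elem_def by blast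
qed

theorem corollary2p5:
  "CUNC TYPE('a::ring_1) \<longleftrightarrow> abelian_ring TYPE('a) \<and> CSNC TYPE('a)"
proof
  assume C: "CUNC TYPE('a)"
  then have ab: "abelian_ring TYPE('a)" by (rule CUNC_imp_abelian_ring)
  moreover have "CSNC TYPE('a)"
    using C abelian_ring_uniquely_nil_clean_imp_strongly_nil_clean[OF ab]
    unfolding CUNC_def CSNC_def by blast
  ultimately show "abelian_ring TYPE('a) \<and> CSNC TYPE('a)" ..
next
  assume "abelian_ring TYPE('a) \<and> CSNC TYPE('a)"
  then show "CUNC TYPE('a)"
    using abelian_ring_strongly_nil_clean_imp_uniquely_nil_clean
    unfolding CUNC_def CSNC_def by blast
qed

end
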